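(* Let $1\le m\le n$ and let $h:[0,1]^{n-m+1}\rightarrow\mathbb{R}$ be any function. Define $g:[0,1]^n\rightarrow\mathbb{R}$ by $$g(w_1,\dots,w_n) = h\big(\max\{w_1,\dots,w_m\},\,w_{m+1},\dots,w_n\big).$$ Suppose that for each $i\in\{1,\dots,m\}$ the partial derivative $\frac{\partial g}{\partial w_i}(t\mathbf{1})$ exists for almost every $t\in[0,1]$ and $t\mapsto \frac{\partial g}{\partial w_i}(t\mathbf{1})$ is integrable on $[0,1]$. Then the integrated-gradients attributions with baseline $\mathbf{0}$ of the features $1,\dots,m$ are all equal, i.e. $$\int_0^1 \frac{\partial g}{\partial w_i}(t\mathbf{1})\,dt = \int_0^1 \frac{\partial g}{\partial w_j}(t\mathbf{1})\,dt \quad\text{for all } i,j\in\{1,\dots,m\}.$$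
   Context: $\mathbf{1}\in\mathbb{R}^n$ denotes the all-ones vector. For a function $g:[0,1]^n\to\mathbb{R}$, the integrated-gradients attribution of feature $i$ with baseline $\mathbf{0}$ (input $\mathbf{1}$) is $\int_0^1 \frac{\partial g}{\partial w_i}(t\mathbf{1})\,dt$. Features $1,\dots,m$ are called redundant because $g$ depends on them only through their maximum. *)

theory Defs
  imports "HOL-Analysis.Analysis"
begin

text \<open>Points of [0,1]^n are functions nat => real; coordinates are 1..n (other
 coordinates are ignored by the functions considered).\<close>

definition diag :: "real \<Rightarrow> nat \<Rightarrow> real" where
  "diag t = (\<lambda>_. t)"

definition partial_deriv :: "((nat \<Rightarrow> real) \<Rightarrow> real) \<Rightarrow> nat \<Rightarrow> (nat \<Rightarrow> real) \<Rightarrow> real" where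
  "partial_deriv g i x = deriv (\<lambda>s. g (x(i := s))) (x i)"

definition partial_exists :: "((nat \<Rightarrow> real) \<Rightarrow> real) \<Rightarrow> nat \<Rightarrow> (nat \<Rightarrow> real) \<Rightarrow> bool" where
  "partial_exists g i x \<longleftrightarrow> (\<lambda>s. g (x(i := s))) differentiable (at (x i))"

definition integrated_gradient :: "((nat \<Rightarrow> real) \<Rightarrow> real) \<Rightarrow> nat \<Rightarrow> real" where
  "integrated_gradient g i = (LINT t:{0..1}|lborel. partial_deriv g i (diag t))"

end

theory Submission
  imports Defs
begin

text \<open>The partial derivatives of g at a diagonal point t\<one> in two redundant coordinates i and j
  coincide pointwise, not just after integration: moving coordinate i (or j) alone to s changes
  the maximum of the redundant block to max s t and leaves every other coordinate at t, so the
  two one-variable restrictions of g through t\<one> are the same function.\<close>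

lemma Max_image_fun_upd_const:
  fixes s t :: "'b::linorder"
  assumes "finite A" "i \<in> A" "j \<in> A" "j \<noteq> i"
  shows "Max ((\<lambda>_. t)(i := s) ` A) = max s t"
proof -
  have "(\<lambda>_. t) ` (A - {i}) = {t}"
    using assms(3,4) by (intro image_constant_conv[THEN trans]) auto
  moreover have "(\<lambda>_. t)(i := s) ` A = insert s ((\<lambda>_. t) ` (A - {i}))"
    by (simp only: fun_upd_image if_P[OF assms(2)])
  ultimately have "(\<lambda>_. t)(i := s) ` A = {s, t}" by simp
  then show ?thesis by (simp add: max_def)
qed

lemma partial_deriv_eq_if_lines_eq:
  assumes "\<And>s. g (x(i := s)) = g (x(j := s))" and "x i = x j"
  shows "partial_deriv g i x = partial_deriv g j x"
  unfolding partial_deriv_def using assms by simp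

lemma max_redundant_lines_eq:
  fixes h g :: "(nat \<Rightarrow> real) \<Rightarrow> real"
  assumes g_def: "\<And>w. g w = h (\<lambda>k. if k = 1 then Max (w ` {1..m})
                               else if 2 \<le> k \<and> k \<le> n - m + 1 then w (m + k - 1) else 0)"
    and "i \<in> {1..m}" "j \<in> {1..m}"
  shows "g ((diag t)(i := s)) = g ((diag t)(j := s))"
proof (cases "i = j")
  case False
  have Max_i: "Max ((diag t)(i := s) ` {1..m}) = max s t"
    unfolding diag_def using assms(2,3) False by (intro Max_image_fun_upd_const[where j = j]) auto
  have Max_j: "Max ((diag t)(j := s) ` {1..m}) = max s t"
    unfolding diag_def using assms(2,3) False by (intro Max_image_fun_upd_const[where j = i]) auto
  have "((diag t)(i := s)) (m + k - 1) = ((diag t)(j := s)) (m + k - 1)" if "2 \<le> k" for k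
    using that assms(2,3) by (auto simp: diag_def)
  then show ?thesis
    unfolding g_def Max_i Max_j by (intro arg_cong[where f = h] ext) simp
qed simp

theorem lemma2:
  fixes m n :: nat
    and h :: "(nat \<Rightarrow> real) \<Rightarrow> real"
    and g :: "(nat \<Rightarrow> real) \<Rightarrow> real"
  assumes "1 \<le> m" and "m \<le> n"
    and g_def: "\<And>w. g w = h (\<lambda>k. if k = 1 then Max (w ` {1..m})
                               else if 2 \<le> k \<and> k \<le> n - m + 1 then w (m + k - 1) else 0)"
    and exists: "\<And>i. i \<in> {1..m} \<Longrightarrow>
                   AE t in lborel. t \<in> {0..1} \<longrightarrow> partial_exists g i (diag t)"
    and integrable: "\<And>i. i \<in> {1..m} \<Longrightarrow>
                   set_integrable lborel {0..1::real} (\<lambda>t. partial_deriv g i (diag t))"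
  shows "\<forall>i\<in>{1..m}. \<forall>j\<in>{1..m}. integrated_gradient g i = integrated_gradient g j"
proof (intro ballI)
  fix i j assume "i \<in> {1..m}" "j \<in> {1..m}"
  then have "partial_deriv g i (diag t) = partial_deriv g j (diag t)" for t
    by (intro partial_deriv_eq_if_lines_eq max_redundant_lines_eq[where g = g and h = h, OF g_def])
       (simp_all add: diag_def)
  then show "integrated_gradient g i = integrated_gradient g j"
    unfolding integrated_gradient_def by simp
qed

end
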